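(* Let $f:\Omega_D\to\mathbb{O}$ be a slice function of class $C^1$. Then $f'_s(x)=\frac16\,\mathrm{Im}(x)^{-1}\big(\Gamma(f)(x)\big)$ for every $x\in\Omega_D\setminus\mathbb{R}$.
   Context: Octonions $\mathbb{O}=\mathbb{H}+\ell\mathbb{H}$ with product $(a+\ell b)(c+\ell d)=(ac-d\bar b)+\ell(\bar a d+cb)$, conjugation $\overline{a+\ell b}=\bar a-\ell b$; real basis $(1,e_1,\dots,e_7)=(1,i,j,k,\ell,\ell i,\ell j,\ell k)$, $x=x_0+\sum_{h=1}^7x_he_h$, $\mathrm{Im}(x)=\sum_{h=1}^7x_he_h$. $\mathbb{S}=\{I\in\mathbb{O}:I^2=-1\}$. $D\subset\mathbb{R}^2$ non-empty open, invariant under $(\alpha,\beta)\mapsto(\alpha,-\beta)$, $\Omega_D=\{\alpha+\beta I:(\alpha,\beta)\in D,I\in\mathbb{S}\}$, assumed connected. A slice function $f$ is one of the form $f(\alpha+\beta I)=F_1(\alpha,\beta)+IF_2(\alpha,\beta)$ for a (unique) stem function $(F_1,F_2):D\to\mathbb{O}^2$, $F_1$ even and $F_2$ odd in $\beta$. The spherical derivative is $f'_s:\Omega_D\setminus\mathbb{R}\to\mathbb{O}$, $f'_s(\alpha+\beta I)=F_2(\alpha,\beta)/\beta$. For $m<n$ in $\{1,\dots,7\}$, $L_{mn}=x_m\frac{\partial}{\partial x_n}-x_n\frac{\partial}{\partial x_m}$, and the spherical Dirac operator on $C^1$ functions is $\Gamma(f)(x)=-\sum_{1\le m<n\le7}e_m\big(e_n\,L_{mn}(f)(x)\big)$.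 *)

theory Defs
  imports "HOL-Analysis.Analysis"
begin

text \<open>Quaternions a + b i + c j + d k are represented as ((a,b),(c,d)) :: (real*real)*(real*real);
octonions a + l b (a, b quaternions) as pairs (a,b).\<close>

type_synonym quat = "(real \<times> real) \<times> (real \<times> real)"
type_synonym oct = "quat \<times> quat"

definition qmul :: "quat \<Rightarrow> quat \<Rightarrow> quat" where
  "qmul p q = (case p of ((a1,b1),(c1,d1)) \<Rightarrow> case q of ((a2,b2),(c2,d2)) \<Rightarrow>
     ((a1*a2 - b1*b2 - c1*c2 - d1*d2, a1*b2 + b1*a2 + c1*d2 - d1*c2),
      (a1*c2 - b1*d2 + c1*a2 + d1*b2, a1*d2 + b1*c2 - c1*b2 + d1*a2)))"

definition qconj :: "quat \<Rightarrow> quat" where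
  "qconj p = (case p of ((a,b),(c,d)) \<Rightarrow> ((a,-b),(-c,-d)))"

text \<open>Cayley--Dickson: (a + l b)(c + l d) = (ac - d conj b) + l (conj a d + c b).\<close>
definition omul :: "oct \<Rightarrow> oct \<Rightarrow> oct" where
  "omul x y = (case x of (a,b) \<Rightarrow> case y of (c,d) \<Rightarrow>
     (qmul a c - qmul d (qconj b), qmul (qconj a) d + qmul c b))"

definition oconj :: "oct \<Rightarrow> oct" where
  "oconj x = (case x of (a,b) \<Rightarrow> (qconj a, - b))"

text \<open>Real basis (1,e1,...,e7) = (1,i,j,k,l,li,lj,lk).\<close>
definition obasis :: "nat \<Rightarrow> oct" where
  "obasis h = (if h = 0 then (((1,0),(0,0)),0)
     else if h = 1 then (((0,1),(0,0)),0)
     else if h = 2 then (((0,0),(1,0)),0)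
     else if h = 3 then (((0,0),(0,1)),0)
     else if h = 4 then (0,((1,0),(0,0)))
     else if h = 5 then (0,((0,1),(0,0)))
     else if h = 6 then (0,((0,0),(1,0)))
     else if h = 7 then (0,((0,0),(0,1)))
     else 0)"

definition ocoord :: "oct \<Rightarrow> nat \<Rightarrow> real" where
  "ocoord x h = inner x (obasis h)"

definition oIm :: "oct \<Rightarrow> oct" where
  "oIm x = (\<Sum>h\<in>{1..7}. ocoord x h *\<^sub>R obasis h)"

definition oinv :: "oct \<Rightarrow> oct" where
  "oinv x = (1 / (norm x)\<^sup>2) *\<^sub>R oconj x"

definition sphere_S :: "oct set" where
  "sphere_S = {I. omul I I = - obasis 0}"

definition OmegaD :: "(real \<times> real) set \<Rightarrow> oct set" where
  "OmegaD D = {a *\<^sub>R obasis 0 + b *\<^sub>R I | a b I. (a,b) \<in> D \<and> I \<in> sphere_S}"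

definition is_stem :: "(real \<times> real) set \<Rightarrow> (oct \<Rightarrow> oct) \<Rightarrow> (real \<times> real \<Rightarrow> oct) \<Rightarrow> (real \<times> real \<Rightarrow> oct) \<Rightarrow> bool" where
  "is_stem D f F1 F2 \<longleftrightarrow>
     (\<forall>a b. (a,b) \<in> D \<longrightarrow> F1 (a,-b) = F1 (a,b) \<and> F2 (a,-b) = - F2 (a,b)) \<and>
     (\<forall>a b I. (a,b) \<in> D \<longrightarrow> I \<in> sphere_S \<longrightarrow>
        f (a *\<^sub>R obasis 0 + b *\<^sub>R I) = F1 (a,b) + omul I (F2 (a,b)))"

definition slice_function :: "(real \<times> real) set \<Rightarrow> (oct \<Rightarrow> oct) \<Rightarrow> bool" where
  "slice_function D f \<longleftrightarrow> (\<exists>F1 F2. is_stem D f F1 F2)"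

definition spherical_derivative_stem :: "(real \<times> real \<Rightarrow> oct) \<Rightarrow> real \<Rightarrow> real \<Rightarrow> oct" where
  "spherical_derivative_stem F2 a b = (1 / b) *\<^sub>R F2 (a,b)"

definition C1_on :: "oct set \<Rightarrow> (oct \<Rightarrow> oct) \<Rightarrow> bool" where
  "C1_on U f \<longleftrightarrow> (\<exists>f' :: oct \<Rightarrow> oct \<Rightarrow>\<^sub>L oct.
      (\<forall>x\<in>U. (f has_derivative blinfun_apply (f' x)) (at x)) \<and> continuous_on U f')"

definition opartial :: "(oct \<Rightarrow> oct) \<Rightarrow> nat \<Rightarrow> oct \<Rightarrow> oct" where
  "opartial f n x = frechet_derivative f (at x) (obasis n)"

definition Lop :: "nat \<Rightarrow> nat \<Rightarrow> (oct \<Rightarrow> oct) \<Rightarrow> oct \<Rightarrow> oct" where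
  "Lop m n f x = ocoord x m *\<^sub>R opartial f n x - ocoord x n *\<^sub>R opartial f m x"

definition Gamma :: "(oct \<Rightarrow> oct) \<Rightarrow> oct \<Rightarrow> oct" where
  "Gamma f x = - (\<Sum>(m,n)\<in>{(m,n). 1 \<le> m \<and> m < n \<and> n \<le> 7}.
       omul (obasis m) (omul (obasis n) (Lop m n f x)))"

end

theory Submission
  imports Defs
begin

(* At x = a + bI the derivative L of f at x is determined on the directions orthogonal to 1 and I
   by the stem equation alone: for a unit J orthogonal to I, f equals F1 + (cos t I + sin t J) F2
   along the circle t -> a + b (cos t I + sin t J), so L (b J) = J F2, i.e. L w = w F2 / b.
   The vectors x_m e_n - x_n e_m in L_mn f(x) are such directions, so
   L_mn f(x) = (I_m e_n - I_n e_m) F2. With e_n (e_n c) = -c and e_m (e_n (e_m c)) = e_n c every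
   summand of Gamma f(x) becomes -(I_m e_m + I_n e_n) F2; as each index lies in six pairs,
   Gamma f(x) = 6 I F2. Finally Im(x)^-1 = -I/b and I (I c) = -c. *)

lemma oct_cases:
  obtains x0 x1 x2 x3 x4 x5 x6 x7 where "x = (((x0,x1),(x2,x3)),((x4,x5),(x6,x7)))"
  by (metis prod.collapse)

lemmas oct_coordinate_defs = omul_def qmul_def qconj_def oconj_def obasis_def ocoord_def
  inner_prod_def scaleR_prod_def plus_prod_def minus_prod_def uminus_prod_def zero_prod_def

lemma bilinear_omul: "bilinear omul"
proof -
  have "omul (x + y) z = omul x z + omul y z" "omul z (x + y) = omul z x + omul z y"
    "omul (r *\<^sub>R x) z = r *\<^sub>R omul x z" "omul z (r *\<^sub>R x) = r *\<^sub>R omul z x" for x y z r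
    by (rule oct_cases[of x], rule oct_cases[of y], rule oct_cases[of z];
        simp add: oct_coordinate_defs algebra_simps)+
  then show ?thesis by (simp add: bilinear_def linear_iff)
qed

interpretation omul: bounded_bilinear omul
  using bilinear_omul bilinear_conv_bounded_bilinear by blast

lemma omul_one_left: "omul (obasis 0) x = x"
  by (rule oct_cases[of x]) (simp add: oct_coordinate_defs)

lemma omul_alternative_left: "omul x (omul x y) = omul (omul x x) y"
  by (rule oct_cases[of x], rule oct_cases[of y]) (simp add: oct_coordinate_defs algebra_simps)

lemma omul_self: "omul x x = (2 * ocoord x 0) *\<^sub>R x - (norm x)\<^sup>2 *\<^sub>R obasis 0"
  unfolding power2_norm_eq_inner
  by (rule oct_cases[of x]) (simp add: oct_coordinate_defs power2_eq_square algebra_simps)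

lemma oconj_eq: "oconj x = (2 * ocoord x 0) *\<^sub>R obasis 0 - x"
  by (rule oct_cases[of x]) (simp add: oct_coordinate_defs)

lemma oIm_eq: "oIm x = x - ocoord x 0 *\<^sub>R obasis 0"
  by (rule oct_cases[of x]) (simp add: oIm_def oct_coordinate_defs numeral_eq_Suc)

lemma inner_obasis_0_self: "inner (obasis 0) (obasis 0) = 1"
  by (simp add: oct_coordinate_defs)

lemma inner_obasis_0_orthogonal: "n \<noteq> 0 \<Longrightarrow> inner (obasis n) (obasis 0) = 0"
  by (simp add: obasis_def inner_prod_def)

lemma sphere_S_iff: "I \<in> sphere_S \<longleftrightarrow> ocoord I 0 = 0 \<and> norm I = 1"
proof
  assume "I \<in> sphere_S"
  define r where "r = ocoord I 0"
  have eq: "(2 * r) *\<^sub>R I = ((norm I)\<^sup>2 - 1) *\<^sub>R obasis 0"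
    using \<open>I \<in> sphere_S\<close> omul_self[of I] unfolding sphere_S_def r_def by (simp add: algebra_simps)
  have "inner I (obasis 0) = r" by (simp add: r_def ocoord_def)
  then have re: "2 * r * r = (norm I)\<^sup>2 - 1"
    using arg_cong[OF eq, of "\<lambda>y. inner y (obasis 0)"] by (simp add: inner_obasis_0_self)
  have "r = 0"
  proof (rule ccontr)
    assume "r \<noteq> 0"
    \<comment> \<open>taking norms in \<open>eq\<close> forces \<open>norm I = \<bar>r\<bar>\<close>, hence \<open>r\<^sup>2 = -1\<close>\<close>
    have "norm (obasis 0) = 1" by (simp add: norm_eq_sqrt_inner inner_obasis_0_self)
    then have "2 * \<bar>r\<bar> * norm I = \<bar>(norm I)\<^sup>2 - 1\<bar>"
      using arg_cong[OF eq, of norm] by simp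
    also have "\<dots> = 2 * r * r" using re zero_le_square[of r] by linarith
    finally have "\<bar>r\<bar> * norm I = \<bar>r\<bar> * \<bar>r\<bar>" by simp
    then have "norm I = \<bar>r\<bar>" using \<open>r \<noteq> 0\<close> by (simp del: abs_mult_self_eq)
    then have "r * r = -1" using re by (simp add: power2_eq_square)
    then show False using zero_le_square[of r] by linarith
  qed
  with re show "ocoord I 0 = 0 \<and> norm I = 1" by (simp add: r_def norm_eq_1 power2_norm_eq_inner)
next
  assume "ocoord I 0 = 0 \<and> norm I = 1"
  then show "I \<in> sphere_S" by (simp add: sphere_S_def omul_self)
qed

lemma sphere_S_rotate:
  assumes "I \<in> sphere_S" "J \<in> sphere_S" "inner I J = 0"
  shows "cos t *\<^sub>R I + sin t *\<^sub>R J \<in> sphere_S"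
proof -
  have "inner (cos t *\<^sub>R I + sin t *\<^sub>R J) (cos t *\<^sub>R I + sin t *\<^sub>R J) = (cos t)\<^sup>2 + (sin t)\<^sup>2"
    using assms by (simp add: sphere_S_iff norm_eq_1 inner_add_left inner_add_right inner_commute
        power2_eq_square)
  then show ?thesis
    using assms by (simp add: sphere_S_iff norm_eq_1 ocoord_def inner_add_left)
qed

lemma obasis_in_sphere_S:
  assumes "n \<in> {1..7}"
  shows "obasis n \<in> sphere_S"
proof -
  have "n = 1 \<or> n = 2 \<or> n = 3 \<or> n = 4 \<or> n = 5 \<or> n = 6 \<or> n = 7" using assms by auto
  then show ?thesis by (elim disjE) (simp_all add: sphere_S_def oct_coordinate_defs)
qed

lemma omul_sphere_S_twice: "I \<in> sphere_S \<Longrightarrow> omul I (omul I x) = - x"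
  by (simp add: omul_alternative_left sphere_S_def omul.minus_left omul_one_left)

(* the left Moufang identity for the anticommuting units e_m and e_n *)
lemma omul_obasis_sandwich:
  assumes "m \<in> {1..7}" "n \<in> {1..7}" "m \<noteq> n"
  shows "omul (obasis m) (omul (obasis n) (omul (obasis m) x)) = omul (obasis n) x"
proof -
  obtain x0 x1 x2 x3 x4 x5 x6 x7 where x: "x = (((x0,x1),(x2,x3)),((x4,x5),(x6,x7)))"
    by (rule oct_cases)
  have "m = 1 \<or> m = 2 \<or> m = 3 \<or> m = 4 \<or> m = 5 \<or> m = 6 \<or> m = 7"
    "n = 1 \<or> n = 2 \<or> n = 3 \<or> n = 4 \<or> n = 5 \<or> n = 6 \<or> n = 7" using assms(1,2) by auto
  then show ?thesis
    using assms(3) unfolding x by (elim disjE) (simp_all add: oct_coordinate_defs)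
qed

lemma sum_ordered_pairs:
  fixes g :: "'i::linorder \<Rightarrow> 'a::real_vector"
  assumes "finite A"
  shows "(\<Sum>(m,n)\<in>{(m,n). m \<in> A \<and> n \<in> A \<and> m < n}. g m + g n) = real (card A - 1) *\<^sub>R sum g A"
proof -
  let ?P = "{(m,n). m \<in> A \<and> n \<in> A \<and> m < n}" and ?Q = "{(m,n). m \<in> A \<and> n \<in> A \<and> n < m}"
  have fin: "finite ?P" "finite ?Q"
    using assms by (auto intro: finite_subset[of _ "A \<times> A"])
  have "(\<Sum>(m,n)\<in>?P. g m + g n) = (\<Sum>(m,n)\<in>?P. g m) + (\<Sum>(m,n)\<in>?P. g n)"
    by (simp add: sum.distrib split_def)
  also have "(\<Sum>(m,n)\<in>?P. g n) = (\<Sum>(m,n)\<in>?Q. g m)"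
    by (rule sum.reindex_bij_witness[of _ prod.swap prod.swap]) auto
  also have "(\<Sum>(m,n)\<in>?P. g m) + (\<Sum>(m,n)\<in>?Q. g m) = (\<Sum>(m,n)\<in>?P \<union> ?Q. g m)"
    by (rule sum.union_disjoint[symmetric]) (use fin in auto)
  also have "?P \<union> ?Q = Sigma A (\<lambda>m. A - {m})"
    by auto
  also have "(\<Sum>(m,n)\<in>Sigma A (\<lambda>m. A - {m}). g m) = (\<Sum>m\<in>A. \<Sum>n\<in>A - {m}. g m)"
    by (rule sum.Sigma[symmetric]) (use assms in auto)
  also have "\<dots> = (\<Sum>m\<in>A. real (card A - 1) *\<^sub>R g m)"
    using assms by (intro sum.cong refl) (simp add: sum_constant_scaleR card_Diff_singleton)
  finally show ?thesis by (simp add: scaleR_sum_right)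
qed

lemma sum_obasis_pairs_omul:
  assumes "ocoord I 0 = 0"
  shows "(\<Sum>(m,n)\<in>{(m,n). 1 \<le> m \<and> m < n \<and> n \<le> 7}. omul (obasis m)
           (omul (obasis n) (omul (ocoord I m *\<^sub>R obasis n - ocoord I n *\<^sub>R obasis m) x)))
         = - 6 *\<^sub>R omul I x"
proof -
  let ?P = "{(m,n). m \<in> {1..7} \<and> n \<in> {1..7} \<and> m < (n::nat)}"
  let ?g = "\<lambda>h. - omul (ocoord I h *\<^sub>R obasis h) x"
  have "{(m,n). 1 \<le> m \<and> m < n \<and> n \<le> 7} = ?P" by auto
  then have "(\<Sum>(m,n)\<in>{(m,n). 1 \<le> m \<and> m < n \<and> n \<le> 7}. omul (obasis m)
           (omul (obasis n) (omul (ocoord I m *\<^sub>R obasis n - ocoord I n *\<^sub>R obasis m) x)))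
         = (\<Sum>(m,n)\<in>?P. ?g m + ?g n)"
    by (auto intro!: sum.cong simp: omul.diff_left omul.diff_right omul.scaleR_left
        omul.scaleR_right omul.minus_right omul_sphere_S_twice obasis_in_sphere_S omul_obasis_sandwich)
  also have "\<dots> = real (card {1..7::nat} - 1) *\<^sub>R sum ?g {1..7}"
    by (rule sum_ordered_pairs) simp
  also have "\<dots> = - 6 *\<^sub>R omul (oIm I) x"
    by (simp add: oIm_def omul.sum_left sum_negf)
  finally show ?thesis
    using assms by (simp add: oIm_eq)
qed

lemma slice_derivative_tangent:
  assumes stem: "is_stem D f F1 F2" and ab: "(a,b) \<in> D"
    and I: "I \<in> sphere_S" and J: "J \<in> sphere_S" and IJ: "inner I J = 0"
    and L: "(f has_derivative L) (at (a *\<^sub>R obasis 0 + b *\<^sub>R I))"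
  shows "L (b *\<^sub>R J) = omul J (F2 (a,b))"
proof -
  define \<gamma> where "\<gamma> t = a *\<^sub>R obasis 0 + b *\<^sub>R (cos t *\<^sub>R I + sin t *\<^sub>R J)" for t :: real
  have "(\<gamma> has_vector_derivative b *\<^sub>R (- sin 0 *\<^sub>R I + cos 0 *\<^sub>R J)) (at 0)"
    unfolding \<gamma>_def by (intro derivative_eq_intros) auto
  then have "(\<gamma> has_derivative (\<lambda>h. h *\<^sub>R (b *\<^sub>R J))) (at 0)"
    by (simp add: has_vector_derivative_def)
  moreover have "(f has_derivative L) (at (\<gamma> 0))"
    using L by (simp add: \<gamma>_def)
  ultimately have "((f \<circ> \<gamma>) has_derivative L \<circ> (\<lambda>h. h *\<^sub>R (b *\<^sub>R J))) (at 0)"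
    by (rule diff_chain_at)
  then have chain: "((f \<circ> \<gamma>) has_vector_derivative L (b *\<^sub>R J)) (at 0)"
    unfolding has_vector_derivative_def o_def linear_scale[OF has_derivative_linear[OF L]] .
  have circle: "f \<circ> \<gamma> = (\<lambda>t. F1 (a,b) + cos t *\<^sub>R omul I (F2 (a,b)) + sin t *\<^sub>R omul J (F2 (a,b)))"
  proof
    fix t
    have "f (\<gamma> t) = F1 (a,b) + omul (cos t *\<^sub>R I + sin t *\<^sub>R J) (F2 (a,b))"
      using stem ab sphere_S_rotate[OF I J IJ] unfolding is_stem_def \<gamma>_def by blast
    then show "(f \<circ> \<gamma>) t = F1 (a,b) + cos t *\<^sub>R omul I (F2 (a,b)) + sin t *\<^sub>R omul J (F2 (a,b))"
      by (simp add: omul.add_left omul.scaleR_left add.assoc)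
  qed
  have "((\<lambda>t. F1 (a,b) + cos t *\<^sub>R omul I (F2 (a,b)) + sin t *\<^sub>R omul J (F2 (a,b)))
      has_vector_derivative omul J (F2 (a,b))) (at 0)"
    by (intro derivative_eq_intros) auto
  then show ?thesis
    using vector_derivative_unique_at chain unfolding circle by blast
qed

lemma slice_derivative_orthogonal:
  assumes stem: "is_stem D f F1 F2" and ab: "(a,b) \<in> D" and b: "b \<noteq> 0" and I: "I \<in> sphere_S"
    and w: "ocoord w 0 = 0" "inner I w = 0"
    and L: "(f has_derivative L) (at (a *\<^sub>R obasis 0 + b *\<^sub>R I))"
  shows "L w = (1 / b) *\<^sub>R omul w (F2 (a,b))"
proof (cases "w = 0")
  case True
  with L show ?thesis by (simp add: linear_0 has_derivative_linear omul.zero_left)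
next
  case False
  define J where "J = (1 / norm w) *\<^sub>R w"
  have J: "J \<in> sphere_S" "inner I J = 0"
    using False w by (simp_all add: sphere_S_iff J_def ocoord_def)
  have "w = (norm w / b) *\<^sub>R (b *\<^sub>R J)"
    using False b by (simp add: J_def)
  then have "L w = (norm w / b) *\<^sub>R L (b *\<^sub>R J)"
    using linear_scale[OF has_derivative_linear[OF L]] by metis
  also have "\<dots> = (1 / b) *\<^sub>R omul (norm w *\<^sub>R J) (F2 (a,b))"
    using slice_derivative_tangent[OF stem ab I J L] by (simp add: omul.scaleR_left)
  also have "norm w *\<^sub>R J = w"
    using False by (simp add: J_def)
  finally show ?thesis .
qed

lemma Lop_eq_derivative:
  assumes "(f has_derivative L) (at x)"
  shows "Lop m n f x = L (ocoord x m *\<^sub>R obasis n - ocoord x n *\<^sub>R obasis m)"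
  using assms
  by (simp add: Lop_def opartial_def frechet_derivative_at[OF assms, symmetric] linear_diff
      linear_scale has_derivative_linear)

lemma ocoord_slice_point: "m \<noteq> 0 \<Longrightarrow> ocoord (a *\<^sub>R obasis 0 + b *\<^sub>R I) m = b * ocoord I m"
  by (simp add: ocoord_def inner_add_left inner_commute[of "obasis 0"] inner_obasis_0_orthogonal)

lemma Lop_slice_function:
  assumes stem: "is_stem D f F1 F2" and ab: "(a,b) \<in> D" and b: "b \<noteq> 0" and I: "I \<in> sphere_S"
    and mn: "m \<noteq> 0" "n \<noteq> 0"
    and L: "(f has_derivative L) (at (a *\<^sub>R obasis 0 + b *\<^sub>R I))"
  shows "Lop m n f (a *\<^sub>R obasis 0 + b *\<^sub>R I)
    = omul (ocoord I m *\<^sub>R obasis n - ocoord I n *\<^sub>R obasis m) (F2 (a,b))"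
proof -
  define w where "w = ocoord I m *\<^sub>R obasis n - ocoord I n *\<^sub>R obasis m"
  have w: "ocoord w 0 = 0" "inner I w = 0"
    using mn by (simp_all add: w_def ocoord_def inner_diff_left inner_diff_right inner_obasis_0_orthogonal)
  have "Lop m n f (a *\<^sub>R obasis 0 + b *\<^sub>R I) = L (b *\<^sub>R w)"
    using mn by (simp add: Lop_eq_derivative[OF L] ocoord_slice_point w_def scaleR_right_diff_distrib)
  also have "\<dots> = (1 / b) *\<^sub>R omul (b *\<^sub>R w) (F2 (a,b))"
    using w by (intro slice_derivative_orthogonal[OF stem ab b I _ _ L]) (simp_all add: ocoord_def)
  also have "\<dots> = omul w (F2 (a,b))"
    using b by (simp add: omul.scaleR_left)
  finally show ?thesis by (simp add: w_def)
qed

lemma Gamma_slice_function: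
  assumes stem: "is_stem D f F1 F2" and ab: "(a,b) \<in> D" and b: "b \<noteq> 0" and I: "I \<in> sphere_S"
    and L: "(f has_derivative L) (at (a *\<^sub>R obasis 0 + b *\<^sub>R I))"
  shows "Gamma f (a *\<^sub>R obasis 0 + b *\<^sub>R I) = 6 *\<^sub>R omul I (F2 (a,b))"
proof -
  have "Gamma f (a *\<^sub>R obasis 0 + b *\<^sub>R I) = - (\<Sum>(m,n)\<in>{(m,n). 1 \<le> m \<and> m < n \<and> n \<le> 7}.
      omul (obasis m) (omul (obasis n)
        (omul (ocoord I m *\<^sub>R obasis n - ocoord I n *\<^sub>R obasis m) (F2 (a,b)))))"
    unfolding Gamma_def
    by (intro arg_cong[where f = uminus] sum.cong) (auto simp: Lop_slice_function[OF stem ab b I _ _ L])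
  also have "\<dots> = 6 *\<^sub>R omul I (F2 (a,b))"
    using I sum_obasis_pairs_omul[of I "F2 (a,b)"] by (simp add: sphere_S_iff)
  finally show ?thesis .
qed

lemma oinv_oIm_slice_point:
  assumes "I \<in> sphere_S"
  shows "oinv (oIm (a *\<^sub>R obasis 0 + b *\<^sub>R I)) = (- 1 / b) *\<^sub>R I"
  using assms
  by (simp add: oIm_eq oinv_def oconj_eq sphere_S_iff ocoord_def inner_add_left inner_obasis_0_self
      power2_eq_square)

theorem lemma2p12:
  fixes D :: "(real \<times> real) set" and f :: "oct \<Rightarrow> oct"
    and F1 F2 :: "real \<times> real \<Rightarrow> oct"
  assumes "open D" and "D \<noteq> {}"
    and "\<forall>a b. (a,b) \<in> D \<longrightarrow> (a,-b) \<in> D"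
    and "connected (OmegaD D)"
    and "is_stem D f F1 F2"
    and "C1_on (OmegaD D) f"
  shows "\<forall>a b I. (a,b) \<in> D \<longrightarrow> b \<noteq> 0 \<longrightarrow> I \<in> sphere_S \<longrightarrow>
           spherical_derivative_stem F2 a b =
             (1/6) *\<^sub>R omul (oinv (oIm (a *\<^sub>R obasis 0 + b *\<^sub>R I)))
                              (Gamma f (a *\<^sub>R obasis 0 + b *\<^sub>R I))"
proof (intro allI impI)
  fix a b I
  assume ab: "(a,b) \<in> D" and b: "b \<noteq> 0" and I: "I \<in> sphere_S"
  let ?x = "a *\<^sub>R obasis 0 + b *\<^sub>R I"
  have "?x \<in> OmegaD D"
    unfolding OmegaD_def using ab I by blast
  then obtain L where L: "(f has_derivative L) (at ?x)"
    \<comment> \<open>the only use of \<open>C1_on\<close>\<close>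
    using assms(6) by (auto simp: C1_on_def)
  have "(1/6) *\<^sub>R omul (oinv (oIm ?x)) (Gamma f ?x)
      = (1/6) *\<^sub>R omul ((- 1 / b) *\<^sub>R I) (6 *\<^sub>R omul I (F2 (a,b)))"
    by (simp add: oinv_oIm_slice_point[OF I] Gamma_slice_function[OF assms(5) ab b I L])
  also have "\<dots> = (1 / b) *\<^sub>R F2 (a,b)"
    using omul_sphere_S_twice[OF I] by (simp add: omul.scaleR_left omul.scaleR_right omul.minus_left)
  finally show "spherical_derivative_stem F2 a b = (1/6) *\<^sub>R omul (oinv (oIm ?x)) (Gamma f ?x)"
    by (simp add: spherical_derivative_stem_def)
qed

end
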